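(* Let $p$ and $q$ be distinct primes, $n=pq$, and let $e$ be a positive integer with $\gcd(e,\varphi(n))=1$. For a positive integer $k$, let $E_{n,e,k}$ be the set of residues $m\in\mathbb{Z}_n$ such that $k$ is the smallest positive integer with $m^{e^{k}}\equiv m \pmod n$ (the fixed points of order $k$ of the map $x\mapsto x^{e}\bmod n$). Then $$|E_{n,e,k}|=\sum_{d\mid k}\mu(k/d)\,\bigl(\gcd(e^{d}-1,p-1)+1\bigr)\bigl(\gcd(e^{d}-1,q-1)+1\bigr),$$ where the sum runs over the positive divisors $d$ of $k$ and $\mu$ is the Möbius function.
   Context: $\mathbb{Z}_n$ denotes a complete residue system modulo $n$, $\varphi$ is Euler's totient function, and $\gcd(a,b)$ is the greatest common divisor (with $\gcd(0,b)=b$). *)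

theory Defs
  imports "HOL-Number_Theory.Number_Theory" "HOL-Computational_Algebra.Squarefree"
begin

definition moebius :: "nat \<Rightarrow> int" where
  "moebius n = (if n = 0 \<or> \<not> squarefree n then 0 else (-1) ^ card (prime_factors n))"

definition fixed_points_order :: "nat \<Rightarrow> nat \<Rightarrow> nat \<Rightarrow> nat set" where
  "fixed_points_order n e k =
     {m \<in> {0..<n}. [m ^ (e ^ k) = m] (mod n) \<and>
        (\<forall>j. 0 < j \<and> j < k \<longrightarrow> \<not> [m ^ (e ^ j) = m] (mod n))}"

end

theory Submission
  imports Defs
begin

text \<open>For fixed m the exponents j with m^(e^j) \<equiv> m (mod n) are closed under sums and
  differences, so they are exactly the multiples of the order of m. Hence the number of
  solutions of m^(e^d) \<equiv> m (mod n) is the sum of the |E_{n,e,c}| over the divisors c of d,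
  and Moebius inversion recovers |E_{n,e,k}|. By the Chinese remainder theorem that number of
  solutions is the product of the counts modulo p and modulo q; modulo a prime p the solutions
  are 0 together with the units whose order divides gcd(e^d - 1, p - 1), and since the unit
  group is cyclic there are exactly gcd(e^d - 1, p - 1) of those.\<close>

lemma prod_prime_factors_squarefree:
  fixes d :: nat
  assumes "d > 0" "squarefree d"
  shows "\<Prod>(prime_factors d) = d"
proof -
  have "\<Prod>(prime_factors d) = (\<Prod>p \<in> prime_factors d. p ^ multiplicity p d)"
    using assms squarefree_factorial_semiring'[of d] by (intro prod.cong) auto
  also have "\<dots> = d"
    using prod_prime_factors[of d] assms by simp
  finally show ?thesis .
qed

lemma prod_prime_factors_dvd: "\<Prod>(prime_factors n) dvd (n :: nat)"
proof (cases "n = 0")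
  case False
  have "\<Prod>(prime_factors n) dvd (\<Prod>p \<in> prime_factors n. p ^ multiplicity p n)"
    by (intro prod_dvd_prod) (auto simp: prime_factors_multiplicity dvd_power)
  also have "\<dots> = n"
    using prod_prime_factors[of n] False by simp
  finally show ?thesis .
qed simp

lemma
  fixes S :: "nat set"
  assumes "finite S" "\<And>p. p \<in> S \<Longrightarrow> prime p"
  shows squarefree_prod_primes: "squarefree (\<Prod>S)"
    and prime_factors_prod_primes: "prime_factors (\<Prod>S) = S"
proof -
  show "squarefree (\<Prod>S)"
    using assms(2) by (intro squarefree_prod_coprime) (auto simp: primes_coprime squarefree_prime)
  have "0 \<notin> S"
    using assms(2)[of 0] by auto
  then have "prime_factors (\<Prod>S) = (\<Union>p \<in> S. prime_factors p)"
    using prime_factors_prod[of S id] assms(1) by simp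
  also have "\<dots> = S"
    using assms(2) by (auto simp: prime_prime_factors)
  finally show "prime_factors (\<Prod>S) = S" .
qed

lemma bij_betw_squarefree_divisors_prime_factors:
  fixes m :: nat
  assumes "m > 0"
  shows "bij_betw prime_factors {d. d dvd m \<and> squarefree d} (Pow (prime_factors m))"
proof (rule bij_betwI[where g = Prod])
  have fin: "finite S" and primes: "\<And>p. p \<in> S \<Longrightarrow> prime p" if "S \<in> Pow (prime_factors m)" for S
    using that finite_subset[of S "prime_factors m"] by auto
  show "prime_factors \<in> {d. d dvd m \<and> squarefree d} \<rightarrow> Pow (prime_factors m)"
    using assms by (auto simp: in_prime_factors_iff intro: dvd_trans)
  show "Prod \<in> Pow (prime_factors m) \<rightarrow> {d. d dvd m \<and> squarefree d}"
  proof
    fix S assume S: "S \<in> Pow (prime_factors m)"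
    have "\<Prod>S dvd \<Prod>(prime_factors m)"
      using S by (intro prod_dvd_prod_subset) auto
    then have "\<Prod>S dvd m"
      using prod_prime_factors_dvd by (rule dvd_trans)
    then show "\<Prod>S \<in> {d. d dvd m \<and> squarefree d}"
      using squarefree_prod_primes[OF fin[OF S] primes[OF S]] by simp
  qed
  show "\<Prod>(prime_factors d) = d" if "d \<in> {d. d dvd m \<and> squarefree d}" for d
    using that assms by (intro prod_prime_factors_squarefree) (auto intro: Nat.gr0I)
  show "prime_factors (\<Prod>S) = S" if "S \<in> Pow (prime_factors m)" for S
    using prime_factors_prod_primes[OF fin[OF that] primes[OF that]] .
qed

lemma moebius_divisor_sum:
  fixes m :: nat
  assumes "m > 0"
  shows "(\<Sum>d \<in> {d. d dvd m}. moebius d) = (if m = 1 then 1 else 0)"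
proof -
  have "(\<Sum>d \<in> {d. d dvd m}. moebius d) = (\<Sum>d \<in> {d. d dvd m \<and> squarefree d}. moebius d)"
    using assms by (intro sum.mono_neutral_right) (auto simp: moebius_def finite_divisors_nat)
  also have "\<dots> = (\<Sum>d \<in> {d. d dvd m \<and> squarefree d}. (-1) ^ card (prime_factors d))"
    using assms by (intro sum.cong) (auto simp: moebius_def)
  also have "\<dots> = (\<Sum>S \<in> Pow (prime_factors m). (-1) ^ card S)"
    using bij_betw_squarefree_divisors_prime_factors[OF assms] by (rule sum.reindex_bij_betw)
  also have "\<dots> = (if m = 1 then 1 else 0)"
  proof (cases "m = 1")
    case False
    then have "prime_factors m \<noteq> {}"
      using assms by (simp add: prime_factorization_empty_iff)
    then have "(\<Sum>S \<in> Pow (prime_factors m). (-1) ^ card S) = (0::int)"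
      by (intro sum_alternating_cancels)
         (use card_subsupersets_even_odd[of "prime_factors m" "{}"] in \<open>auto simp: Pow_def\<close>)
    then show ?thesis
      using False by simp
  qed simp
  finally show ?thesis .
qed

lemma dvd_div_swap_iff:
  fixes k c d :: nat
  assumes "k > 0" "d dvd k"
  shows "c dvd k div d \<longleftrightarrow> c dvd k \<and> d dvd k div c"
proof
  assume "c dvd k div d"
  then have cd: "c * d dvd k"
    using assms dvd_div_iff_mult[of d k c] by auto
  then have c: "c dvd k" "c \<noteq> 0"
    using assms dvd_mult_left[of c d k] by auto
  show "c dvd k \<and> d dvd k div c"
    using c cd dvd_div_iff_mult[of c k d] by (simp add: mult.commute)
next
  assume c: "c dvd k \<and> d dvd k div c"
  then have "c \<noteq> 0"
    using assms by auto
  then have "d * c dvd k"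
    using c dvd_div_iff_mult[of c k d] by simp
  then show "c dvd k div d"
    using assms dvd_div_iff_mult[of d k c] by (auto simp: mult.commute)
qed

lemma div_div_self:
  fixes k d :: nat
  assumes "k > 0" "d dvd k"
  shows "k div (k div d) = d"
  using div_div_eq_right[of d k k] assms by simp

lemma div_dvd_self:
  fixes k d :: nat
  assumes "d dvd k"
  shows "k div d dvd k"
  using assms by (metis dvd_div_mult_self dvd_triv_left)

lemma moebius_inversion:
  fixes F g :: "nat \<Rightarrow> int" and k :: nat
  assumes "k > 0" and F: "\<And>d. d > 0 \<Longrightarrow> F d = (\<Sum>c \<in> {c. c dvd d}. g c)"
  shows "(\<Sum>d \<in> {d. d dvd k}. moebius (k div d) * F d) = g k"
proof -
  let ?D = "{d. d dvd k}"
  have fin: "finite ?D"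
    using assms by (simp add: finite_divisors_nat)
  have quotient_pos: "k div d > 0" if "d \<in> ?D" for d
    using that assms by (auto elim!: dvdE)
  have "bij_betw (\<lambda>d. k div d) ?D ?D"
    by (rule bij_betwI[where g = "\<lambda>d. k div d"])
       (use assms in \<open>auto simp: div_div_self intro: div_dvd_self\<close>)
  then have "(\<Sum>d \<in> ?D. moebius (k div d) * F d) = (\<Sum>d \<in> ?D. moebius d * F (k div d))"
    using assms by (subst sum.reindex_bij_betw[symmetric]) (auto simp: div_div_self)
  also have "\<dots> = (\<Sum>d \<in> ?D. \<Sum>c \<in> {c. c \<in> ?D \<and> c dvd k div d}. moebius d * g c)"
  proof (rule sum.cong[OF refl])
    fix d assume d: "d \<in> ?D"
    have "{c. c \<in> ?D \<and> c dvd k div d} = {c. c dvd k div d}"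
      using d div_dvd_self[of d k] by (auto intro: dvd_trans)
    then show "moebius d * F (k div d) = (\<Sum>c \<in> {c. c \<in> ?D \<and> c dvd k div d}. moebius d * g c)"
      using F[OF quotient_pos[OF d]] by (simp add: sum_distrib_left)
  qed
  also have "\<dots> = (\<Sum>c \<in> ?D. \<Sum>d \<in> {d. d \<in> ?D \<and> c dvd k div d}. moebius d * g c)"
    by (rule sum.swap_restrict[OF fin fin])
  also have "\<dots> = (\<Sum>c \<in> ?D. g c * (\<Sum>d \<in> {d. d dvd k div c}. moebius d))"
  proof (rule sum.cong[OF refl])
    fix c assume c: "c \<in> ?D"
    have "{d. d \<in> ?D \<and> c dvd k div d} = {d. d dvd k div c}"
      using c assms dvd_div_swap_iff[OF assms(1)] div_dvd_self[of c k] by (auto intro: dvd_trans)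
    then show "(\<Sum>d \<in> {d. d \<in> ?D \<and> c dvd k div d}. moebius d * g c) =
        g c * (\<Sum>d \<in> {d. d dvd k div c}. moebius d)"
      by (simp add: sum_distrib_left mult.commute)
  qed
  also have "\<dots> = (\<Sum>c \<in> ?D. if c = k then g c else 0)"
  proof (rule sum.cong[OF refl])
    fix c assume c: "c \<in> ?D"
    have "k div c = 1 \<longleftrightarrow> c = k"
      using c assms by (auto elim!: dvdE)
    then show "g c * (\<Sum>d \<in> {d. d dvd k div c}. moebius d) = (if c = k then g c else 0)"
      using moebius_divisor_sum[OF quotient_pos[OF c]] by auto
  qed
  also have "\<dots> = g k"
    using fin by (simp add: sum.delta)
  finally show ?thesis .
qed

lemma dvd_if_diff_closed_least_positive:
  fixes Q :: "nat \<Rightarrow> bool"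
  assumes diff: "\<And>a b. Q a \<Longrightarrow> Q b \<Longrightarrow> b \<le> a \<Longrightarrow> Q (a - b)"
    and c: "Q c" "c > 0" "\<And>j. 0 < j \<Longrightarrow> j < c \<Longrightarrow> \<not> Q j"
    and "Q d"
  shows "c dvd d"
proof -
  have "Q (d mod c)"
    using \<open>Q d\<close>
  proof (induction d rule: less_induct)
    case (less d)
    show ?case
    proof (cases "d < c")
      case False
      then have "Q ((d - c) mod c)"
        using less diff[OF less.prems c(1)] c(2) by simp
      then show ?thesis
        using False by (simp add: le_mod_geq)
    qed (use less.prems in simp)
  qed
  then have "d mod c = 0"
    using c by (meson mod_less_divisor neq0_conv)
  then show ?thesis
    by (simp add: dvd_eq_mod_eq_0)
qed

lemma Collect_period_eq_Union_least_period:
  fixes P :: "'a \<Rightarrow> nat \<Rightarrow> bool"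
  assumes "d > 0"
    and zero: "\<And>m. P m 0"
    and add: "\<And>m a b. P m a \<Longrightarrow> P m b \<Longrightarrow> P m (a + b)"
    and diff: "\<And>m a b. P m a \<Longrightarrow> P m b \<Longrightarrow> b \<le> a \<Longrightarrow> P m (a - b)"
  shows "{m \<in> A. P m d} =
    (\<Union>c \<in> {c. c dvd d}. {m \<in> A. P m c \<and> (\<forall>j. 0 < j \<and> j < c \<longrightarrow> \<not> P m j)})"
proof (intro equalityI subsetI)
  fix m assume m: "m \<in> {m \<in> A. P m d}"
  define c where "c = (LEAST j. 0 < j \<and> P m j)"
  have c: "0 < c \<and> P m c"
    unfolding c_def by (rule LeastI[of _ d]) (use m assms in auto)
  have c_least: "\<not> P m j" if "0 < j" "j < c" for j
    using not_less_Least[of j "\<lambda>j. 0 < j \<and> P m j"] that unfolding c_def by auto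
  have "c dvd d"
    using m c c_least by (intro dvd_if_diff_closed_least_positive[of "P m"] diff) auto
  then show "m \<in> (\<Union>c \<in> {c. c dvd d}. {m \<in> A. P m c \<and> (\<forall>j. 0 < j \<and> j < c \<longrightarrow> \<not> P m j)})"
    using m c c_least by auto
next
  fix m assume "m \<in> (\<Union>c \<in> {c. c dvd d}. {m \<in> A. P m c \<and> (\<forall>j. 0 < j \<and> j < c \<longrightarrow> \<not> P m j)})"
  then obtain c where "c dvd d" and m: "m \<in> A" "P m c"
    by blast
  then obtain t where d: "d = c * t"
    by (elim dvdE)
  have "P m (c * t)" for t
    by (induction t) (simp_all add: zero add m(2))
  then show "m \<in> {m \<in> A. P m d}"
    using m d by simp
qed

lemma card_period_divisor_sum:
  fixes P :: "'a \<Rightarrow> nat \<Rightarrow> bool"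
  assumes "finite A" "d > 0"
    and "\<And>m. P m 0"
    and "\<And>m a b. P m a \<Longrightarrow> P m b \<Longrightarrow> P m (a + b)"
    and "\<And>m a b. P m a \<Longrightarrow> P m b \<Longrightarrow> b \<le> a \<Longrightarrow> P m (a - b)"
  shows "card {m \<in> A. P m d} =
    (\<Sum>c \<in> {c. c dvd d}. card {m \<in> A. P m c \<and> (\<forall>j. 0 < j \<and> j < c \<longrightarrow> \<not> P m j)})"
proof -
  let ?E = "\<lambda>c. {m \<in> A. P m c \<and> (\<forall>j. 0 < j \<and> j < c \<longrightarrow> \<not> P m j)}"
  have "card (\<Union>c \<in> {c. c dvd d}. ?E c) = (\<Sum>c \<in> {c. c dvd d}. card (?E c))"
  proof (rule card_UN_disjoint)
    show "finite {c. c dvd d}"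
      using assms by (simp add: finite_divisors_nat)
    show "\<forall>c \<in> {c. c dvd d}. finite (?E c)"
      using assms(1) by simp
    show "\<forall>i \<in> {c. c dvd d}. \<forall>j \<in> {c. c dvd d}. i \<noteq> j \<longrightarrow> ?E i \<inter> ?E j = {}"
    proof (intro ballI impI)
      fix i j assume ij: "i \<in> {c. c dvd d}" "j \<in> {c. c dvd d}" "i \<noteq> j"
      then have "0 < i" "0 < j"
        using assms(2) dvd_pos_nat by auto
      with ij(3) show "?E i \<inter> ?E j = {}"
        by (cases "i < j") auto
    qed
  qed
  moreover have "{m \<in> A. P m d} = (\<Union>c \<in> {c. c dvd d}. ?E c)"
    by (rule Collect_period_eq_Union_least_period) (use assms in auto)
  ultimately show ?thesis
    by simp
qed

lemma cong_power_exp_self_add: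
  fixes m e n :: nat
  assumes "[m ^ (e ^ a) = m] (mod n)" "[m ^ (e ^ b) = m] (mod n)"
  shows "[m ^ (e ^ (a + b)) = m] (mod n)"
proof -
  have "m ^ (e ^ (a + b)) = (m ^ (e ^ a)) ^ (e ^ b)"
    by (simp add: power_add power_mult)
  also have "[\<dots> = m ^ (e ^ b)] (mod n)"
    using assms(1) by (rule cong_pow)
  finally show ?thesis
    using assms(2) by (rule cong_trans)
qed

lemma cong_power_exp_self_diff:
  fixes m e n :: nat
  assumes "[m ^ (e ^ a) = m] (mod n)" "[m ^ (e ^ b) = m] (mod n)" "b \<le> a"
  shows "[m ^ (e ^ (a - b)) = m] (mod n)"
proof -
  have "[m ^ (e ^ (a - b)) = (m ^ (e ^ b)) ^ (e ^ (a - b))] (mod n)"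
    using assms(2) by (intro cong_pow) (rule cong_sym)
  also have "(m ^ (e ^ b)) ^ (e ^ (a - b)) = m ^ (e ^ a)"
    using assms(3) by (simp add: power_add[symmetric] power_mult[symmetric])
  finally show ?thesis
    using assms(1) by (rule cong_trans)
qed

lemma card_cong_power_exp_self_divisor_sum:
  fixes n e d :: nat
  assumes "d > 0"
  shows "card {m \<in> {0..<n}. [m ^ (e ^ d) = m] (mod n)} =
    (\<Sum>c \<in> {c. c dvd d}. card (fixed_points_order n e c))"
  unfolding fixed_points_order_def
  by (rule card_period_divisor_sum)
     (use assms cong_power_exp_self_add cong_power_exp_self_diff in auto)

lemma card_roots_of_unity_mod_prime:
  fixes p K :: nat
  assumes p: "prime p"
  shows "card {x \<in> totatives p. [x ^ K = 1] (mod p)} = gcd K (p - 1)"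
proof -
  let ?g = "gcd K (p - 1)"
  have p1: "p > 1"
    using p prime_gt_1_nat by blast
  have "{x \<in> totatives p. [x ^ K = 1] (mod p)} = (\<Union>d \<in> {d. d dvd ?g}. {x \<in> totatives p. ord p x = d})"
  proof safe
    fix x assume x: "x \<in> totatives p" "[x ^ K = 1] (mod p)"
    have "ord p x dvd K"
      using x(2) ord_divides'[of x K p] by simp
    moreover have "ord p x dvd p - 1"
      using x(1) order_divides_totient[of p x] totient_prime[OF p]
      by (simp add: in_totatives_iff coprime_commute)
    ultimately show "x \<in> (\<Union>d \<in> {d. d dvd ?g}. {x \<in> totatives p. ord p x = d})"
      using x by auto
  next
    fix x assume "ord p x dvd ?g"
    then have "ord p x dvd K"
      by (rule dvd_trans) simp
    then show "[x ^ K = 1] (mod p)"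
      using ord_divides'[of x K p] by simp
  qed
  also have "card \<dots> = (\<Sum>d \<in> {d. d dvd ?g}. card {x \<in> totatives p. ord p x = d})"
    using p1 by (intro card_UN_disjoint) (auto simp: finite_divisors_nat)
  also have "\<dots> = (\<Sum>d \<in> {d. d dvd ?g}. totient d)"
    using prime_card_elements_with_ord_eq_totient[OF p1 p] by (intro sum.cong) (auto intro: dvd_trans)
  also have "\<dots> = ?g"
    by (rule totient_divisor_sum)
  finally show ?thesis .
qed

lemma cong_power_self_iff_unit:
  fixes a p N :: nat
  assumes "coprime a p" "N > 0"
  shows "[a ^ N = a] (mod p) \<longleftrightarrow> [a ^ (N - 1) = 1] (mod p)"
proof -
  have "a ^ N = a * a ^ (N - 1)"
    using assms(2) by (cases N) auto
  then show ?thesis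
    using cong_mult_lcancel_nat[OF assms(1), of "a ^ (N - 1)" 1] by simp
qed

lemma card_cong_power_self_mod_prime:
  fixes p N :: nat
  assumes p: "prime p" and N: "N > 0"
  shows "card {a \<in> {..<p}. [a ^ N = a] (mod p)} = gcd (N - 1) (p - 1) + 1"
proof -
  have "{a \<in> {..<p}. [a ^ N = a] (mod p)} = insert 0 {a \<in> totatives p. [a ^ (N - 1) = 1] (mod p)}"
  proof (intro equalityI subsetI)
    fix a assume a: "a \<in> {a \<in> {..<p}. [a ^ N = a] (mod p)}"
    show "a \<in> insert 0 {a \<in> totatives p. [a ^ (N - 1) = 1] (mod p)}"
    proof (cases "a = 0")
      case False
      then have "a \<in> totatives p"
        using a totatives_prime[OF p] by auto
      then show ?thesis
        using a cong_power_self_iff_unit[OF _ N] by (simp add: in_totatives_iff coprime_commute)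
    qed simp
  next
    fix a assume a: "a \<in> insert 0 {a \<in> totatives p. [a ^ (N - 1) = 1] (mod p)}"
    then have "a < p"
      using prime_gt_0_nat[OF p] totatives_prime[OF p] by auto
    then show "a \<in> {a \<in> {..<p}. [a ^ N = a] (mod p)}"
      using a N cong_power_self_iff_unit[OF _ N] by (auto simp: in_totatives_iff coprime_commute power_0_left)
  qed
  moreover have "0 \<notin> totatives p"
    by (simp add: in_totatives_iff)
  ultimately show ?thesis
    using card_roots_of_unity_mod_prime[OF p, of "N - 1"] by simp
qed

lemma bij_betw_mod_pair:
  fixes m1 m2 :: nat
  assumes "coprime m1 m2" "m1 \<noteq> 0" "m2 \<noteq> 0"
  shows "bij_betw (\<lambda>x. (x mod m1, x mod m2)) {..<m1 * m2} ({..<m1} \<times> {..<m2})"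
  unfolding bij_betw_def
proof
  show "inj_on (\<lambda>x. (x mod m1, x mod m2)) {..<m1 * m2}"
  proof (intro inj_onI)
    fix x y assume "x \<in> {..<m1 * m2}" "y \<in> {..<m1 * m2}" "(x mod m1, x mod m2) = (y mod m1, y mod m2)"
    then show "x = y"
      using binary_chinese_remainder_unique_nat[OF assms, of x x] by (auto simp: cong_def)
  qed
  show "(\<lambda>x. (x mod m1, x mod m2)) ` {..<m1 * m2} = {..<m1} \<times> {..<m2}"
  proof (intro equalityI subsetI)
    fix y assume "y \<in> {..<m1} \<times> {..<m2}"
    then obtain a b where y: "y = (a, b)" "a < m1" "b < m2"
      by auto
    moreover obtain x where "x < m1 * m2" "[x = a] (mod m1)" "[x = b] (mod m2)"
      using binary_chinese_remainder_unique_nat[OF assms, of a b] by blast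
    ultimately show "y \<in> (\<lambda>x. (x mod m1, x mod m2)) ` {..<m1 * m2}"
      by (auto simp: cong_def)
  qed (use assms in auto)
qed

lemma card_cong_power_self_mult_coprime:
  fixes m1 m2 N :: nat
  assumes "coprime m1 m2" "m1 \<noteq> 0" "m2 \<noteq> 0"
  shows "card {x \<in> {..<m1 * m2}. [x ^ N = x] (mod m1 * m2)} =
    card {a \<in> {..<m1}. [a ^ N = a] (mod m1)} * card {b \<in> {..<m2}. [b ^ N = b] (mod m2)}"
proof -
  have crt_iff: "[x ^ N = x] (mod m1 * m2) \<longleftrightarrow> [x ^ N = x] (mod m1) \<and> [x ^ N = x] (mod m2)" for x
  proof
    assume h: "[x ^ N = x] (mod m1 * m2)"
    moreover from h have "[x ^ N = x] (mod m2 * m1)"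
      by (simp add: mult.commute)
    ultimately show "[x ^ N = x] (mod m1) \<and> [x ^ N = x] (mod m2)"
      by (simp add: cong_modulus_mult_nat)
  qed (use coprime_cong_mult_nat assms(1) in blast)
  have pair_iff: "[(x mod m1) ^ N = x mod m1] (mod m1) \<and> [(x mod m2) ^ N = x mod m2] (mod m2) \<longleftrightarrow>
      [x ^ N = x] (mod m1 * m2)" for x
    unfolding crt_iff by (simp add: cong_def power_mod)
  have bij: "bij_betw (\<lambda>x. (x mod m1, x mod m2))
      {x \<in> {..<m1 * m2}. [x ^ N = x] (mod m1 * m2)}
      {y \<in> {..<m1} \<times> {..<m2}. [fst y ^ N = fst y] (mod m1) \<and> [snd y ^ N = snd y] (mod m2)}"
    by (intro bij_betw_Collect[OF bij_betw_mod_pair[OF assms]]) (simp only: fst_conv snd_conv pair_iff)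
  have product: "{y \<in> {..<m1} \<times> {..<m2}. [fst y ^ N = fst y] (mod m1) \<and> [snd y ^ N = snd y] (mod m2)} =
      {a \<in> {..<m1}. [a ^ N = a] (mod m1)} \<times> {b \<in> {..<m2}. [b ^ N = b] (mod m2)}"
    by auto
  show ?thesis
    using bij_betw_same_card[OF bij] unfolding product by (simp add: card_cartesian_product)
qed

theorem theorem2:
  fixes p q e k :: nat
  assumes "prime p" and "prime q" and "p \<noteq> q"
    and "e > 0" and "coprime e (totient (p * q))"
    and "k > 0"
  shows "int (card (fixed_points_order (p * q) e k)) =
    (\<Sum>d \<in> {d. d dvd k}. moebius (k div d) *
        (int (gcd (e ^ d - 1) (p - 1)) + 1) * (int (gcd (e ^ d - 1) (q - 1)) + 1))"
proof -
  define F where "F d = int (card {m \<in> {0..<p * q}. [m ^ (e ^ d) = m] (mod p * q)})" for d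
  have F_divisor_sum: "F d = (\<Sum>c \<in> {c. c dvd d}. int (card (fixed_points_order (p * q) e c)))"
    if "d > 0" for d
    unfolding F_def using card_cong_power_exp_self_divisor_sum[OF that] by (simp add: of_nat_sum)
  have F_closed_form: "F d = (int (gcd (e ^ d - 1) (p - 1)) + 1) * (int (gcd (e ^ d - 1) (q - 1)) + 1)"
    for d
  proof -
    have N: "e ^ d > 0"
      using assms(4) by simp
    have pq: "coprime p q" "p \<noteq> 0" "q \<noteq> 0"
      using assms(1-3) by (auto simp: primes_coprime)
    show ?thesis
      unfolding F_def atLeast0LessThan card_cong_power_self_mult_coprime[OF pq]
        card_cong_power_self_mod_prime[OF assms(1) N] card_cong_power_self_mod_prime[OF assms(2) N]
      by (simp add: algebra_simps)
  qed
  have "int (card (fixed_points_order (p * q) e k)) = (\<Sum>d \<in> {d. d dvd k}. moebius (k div d) * F d)"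
    using moebius_inversion[OF assms(6) F_divisor_sum] by simp
  also have "\<dots> = (\<Sum>d \<in> {d. d dvd k}. moebius (k div d) *
      (int (gcd (e ^ d - 1) (p - 1)) + 1) * (int (gcd (e ^ d - 1) (q - 1)) + 1))"
    by (simp add: F_closed_form mult.assoc)
  finally show ?thesis .
qed

end
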